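(* The syntactic pomset automaton $A_\Sigma$ is bounded.
   Context: Fix a finite alphabet $\Sigma$. The set $\mathcal{T}$ of sr-expressions is generated by $e, f ::= 0 \mid 1 \mid \mathtt{a}\in\Sigma \mid e+f \mid e\cdot f \mid e\parallel f \mid e^*$. $\mathcal{F}\subseteq\mathcal{T}$ is the smallest set with $1\in\mathcal{F}$; $e+f\in\mathcal{F}$ if $e\in\mathcal{F}$ or $f\in\mathcal{F}$; $e\cdot f, e\parallel f\in\mathcal{F}$ if $e,f\in\mathcal{F}$; and $e^*\in\mathcal{F}$ for all $e$. A pomset automaton (PA) is a tuple $\langle Q,F,\delta,\gamma\rangle$ with states $Q$, accepting states $F\subseteq Q$, $\delta: Q\times\Sigma\to 2^Q$ and $\gamma: Q\times\mathbb{M}(Q)\to 2^Q$ (with $\mathbb{M}(Q)$ the finite multisets over $Q$), such that for each $q$ only finitely many $\phi$ have $\gamma(q,\phi)\neq\emptyset$. The support relation $\preceq$ is the smallest preorder on $Q$ with $q'\preceq q$ whenever $q'\in\delta(q,\mathtt a)$ for some $\mathtt a$, or $q'\in\gamma(q,\phi)$ for some $\phi$, or $q'\in\phi$ for some $\phi$ with $\gamma(q,\phi)\neq\emptyset$. A set $Q'\subseteq Q$ is support-closed if $q\in Q'$ and $q'\preceq q$ imply $q'\in Q'$; the support of $q$ is the smallest support-closed set containing $q$. The PA is bounded if the support of every state is finite. For $e\in\mathcal{T}$ and $T\subseteq\mathcal{T}$, let $e\star T = T$ if $e\in\mathcal{F}$ and $\emptyset$ otherwise. The derivatives $\delta_\Sigma:\mathcal{T}\times\Sigma\to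 2^{\mathcal{T}}$ and $\gamma_\Sigma:\mathcal{T}\times\mathbb{M}(\mathcal{T})\to 2^{\mathcal{T}}$ are defined by: $\delta_\Sigma(0,\mathtt a)=\delta_\Sigma(1,\mathtt a)=\emptyset$; $\delta_\Sigma(\mathtt b,\mathtt a)=\{1 : \mathtt a=\mathtt b\}$; $\delta_\Sigma(e+f,\mathtt a)=\delta_\Sigma(e,\mathtt a)\cup\delta_\Sigma(f,\mathtt a)$; $\delta_\Sigma(e\cdot f,\mathtt a)=\{g\cdot f : g\in\delta_\Sigma(e,\mathtt a)\}\cup e\star\delta_\Sigma(f,\mathtt a)$; $\delta_\Sigma(e\parallel f,\mathtt a)=\emptyset$; $\delta_\Sigma(e^*,\mathtt a)=\{g\cdot e^* : g\in\delta_\Sigma(e,\mathtt a)\}$; and $\gamma_\Sigma(0,\phi)=\gamma_\Sigma(1,\phi)=\gamma_\Sigma(\mathtt b,\phi)=\emptyset$; $\gamma_\Sigma(e+f,\phi)=\gamma_\Sigma(e,\phi)\cup\gamma_\Sigma(f,\phi)$; $\gamma_\Sigma(e\cdot f,\phi)=\{g\cdot f: g\in\gamma_\Sigma(e,\phi)\}\cup e\star\gamma_\Sigma(f,\phi)$; $\gamma_\Sigma(e\parallel f,\phi)=\{1 : \phi=\{\!\{e,f\}\!\}\}$; $\gamma_\Sigma(e^*,\phi)=\{g\cdot e^* : g\in\gamma_\Sigma(e,\phi)\}$. The syntactic PA is $A_\Sigma=\langle\mathcal{T},\mathcal{F},\delta_\Sigma,\gamma_\Sigma\rangle$. *)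

theory Defs
  imports Main "HOL-Library.Multiset"
begin

datatype 'a srexp =
    Zero
  | One
  | Sym 'a
  | Plus "'a srexp" "'a srexp"
  | Seq "'a srexp" "'a srexp"
  | Par "'a srexp" "'a srexp"
  | Star "'a srexp"

text \<open>The set F of expressions (accepting states of the syntactic PA).\<close>
inductive_set Fset :: "'a srexp set" where
  F_one: "One \<in> Fset"
| F_plus_l: "e \<in> Fset \<Longrightarrow> Plus e f \<in> Fset"
| F_plus_r: "f \<in> Fset \<Longrightarrow> Plus e f \<in> Fset"
| F_seq: "e \<in> Fset \<Longrightarrow> f \<in> Fset \<Longrightarrow> Seq e f \<in> Fset"
| F_par: "e \<in> Fset \<Longrightarrow> f \<in> Fset \<Longrightarrow> Par e f \<in> Fset"
| F_star: "Star e \<in> Fset"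

definition fstar :: "'a srexp \<Rightarrow> 'a srexp set \<Rightarrow> 'a srexp set" where
  "fstar e T = (if e \<in> Fset then T else {})"

fun delta_S :: "'a srexp \<Rightarrow> 'a \<Rightarrow> 'a srexp set" where
  "delta_S Zero a = {}"
| "delta_S One a = {}"
| "delta_S (Sym b) a = (if a = b then {One} else {})"
| "delta_S (Plus e f) a = delta_S e a \<union> delta_S f a"
| "delta_S (Seq e f) a = {Seq g f | g. g \<in> delta_S e a} \<union> fstar e (delta_S f a)"
| "delta_S (Par e f) a = {}"
| "delta_S (Star e) a = {Seq g (Star e) | g. g \<in> delta_S e a}"

fun gamma_S :: "'a srexp \<Rightarrow> 'a srexp multiset \<Rightarrow> 'a srexp set" where
  "gamma_S Zero \<phi> = {}"
| "gamma_S One \<phi> = {}"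
| "gamma_S (Sym b) \<phi> = {}"
| "gamma_S (Plus e f) \<phi> = gamma_S e \<phi> \<union> gamma_S f \<phi>"
| "gamma_S (Seq e f) \<phi> = {Seq g f | g. g \<in> gamma_S e \<phi>} \<union> fstar e (gamma_S f \<phi>)"
| "gamma_S (Par e f) \<phi> = (if \<phi> = {#e, f#} then {One} else {})"
| "gamma_S (Star e) \<phi> = {Seq g (Star e) | g. g \<in> gamma_S e \<phi>}"

section \<open>Pomset automata (state set = UNIV of the state type)\<close>

definition supp_step ::
  "('q \<Rightarrow> 'a \<Rightarrow> 'q set) \<Rightarrow> ('q \<Rightarrow> 'q multiset \<Rightarrow> 'q set) \<Rightarrow> 'q \<Rightarrow> 'q \<Rightarrow> bool" where
  "supp_step \<delta> \<gamma> q' q \<longleftrightarrow>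
     (\<exists>a. q' \<in> \<delta> q a) \<or> (\<exists>\<phi>. q' \<in> \<gamma> q \<phi>) \<or> (\<exists>\<phi>. q' \<in># \<phi> \<and> \<gamma> q \<phi> \<noteq> {})"

definition supports ::
  "('q \<Rightarrow> 'a \<Rightarrow> 'q set) \<Rightarrow> ('q \<Rightarrow> 'q multiset \<Rightarrow> 'q set) \<Rightarrow> 'q \<Rightarrow> 'q \<Rightarrow> bool" where
  "supports \<delta> \<gamma> = (supp_step \<delta> \<gamma>)\<^sup>*\<^sup>*"

definition support_closed ::
  "('q \<Rightarrow> 'a \<Rightarrow> 'q set) \<Rightarrow> ('q \<Rightarrow> 'q multiset \<Rightarrow> 'q set) \<Rightarrow> 'q set \<Rightarrow> bool" where
  "support_closed \<delta> \<gamma> S \<longleftrightarrow> (\<forall>q q'. q \<in> S \<longrightarrow> supports \<delta> \<gamma> q' q \<longrightarrow> q' \<in> S)"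

definition support_of ::
  "('q \<Rightarrow> 'a \<Rightarrow> 'q set) \<Rightarrow> ('q \<Rightarrow> 'q multiset \<Rightarrow> 'q set) \<Rightarrow> 'q \<Rightarrow> 'q set" where
  "support_of \<delta> \<gamma> q = \<Inter> {S. support_closed \<delta> \<gamma> S \<and> q \<in> S}"

definition bounded_PA ::
  "('q \<Rightarrow> 'a \<Rightarrow> 'q set) \<Rightarrow> ('q \<Rightarrow> 'q multiset \<Rightarrow> 'q set) \<Rightarrow> bool" where
  "bounded_PA \<delta> \<gamma> \<longleftrightarrow> (\<forall>q. finite (support_of \<delta> \<gamma> q))"

end

theory Submission
  imports Defs
begin

text \<open>Every expression \<open>e\<close> lies in a finite set closed under direct support, built by
  recursion on \<open>e\<close>: it contains the subterms of \<open>e\<close>, \<open>1\<close>, and for each subterm \<open>e\<^sub>1 \<cdot> e\<^sub>2\<close>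
  (resp. \<open>e\<^sub>1\<^sup>*\<close>) the terms \<open>h \<cdot> e\<^sub>2\<close> (resp. \<open>h \<cdot> e\<^sub>1\<^sup>*\<close>) with \<open>h\<close> in the set built for \<open>e\<^sub>1\<close>.
  Such a set is support-closed, hence contains the support of \<open>e\<close>.\<close>

lemma support_closed_if_step_closed:
  assumes "\<And>q q'. q \<in> S \<Longrightarrow> supp_step \<delta> \<gamma> q' q \<Longrightarrow> q' \<in> S"
  shows "support_closed \<delta> \<gamma> S"
proof -
  have "q' \<in> S" if "(supp_step \<delta> \<gamma>)\<^sup>*\<^sup>* q' q" "q \<in> S" for q q'
    using that by (induction rule: converse_rtranclp_induct) (auto intro: assms)
  then show ?thesis
    unfolding support_closed_def supports_def by blast
qed

lemma support_of_subset:
  "support_closed \<delta> \<gamma> S \<Longrightarrow> q \<in> S \<Longrightarrow> support_of \<delta> \<gamma> q \<subseteq> S"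
  unfolding support_of_def by blast

lemma bounded_PA_if_finite_step_closed:
  assumes "\<And>q. q \<in> C q" "\<And>q. finite (C q)"
    and "\<And>q p p'. p \<in> C q \<Longrightarrow> supp_step \<delta> \<gamma> p' p \<Longrightarrow> p' \<in> C q"
  shows "bounded_PA \<delta> \<gamma>"
  unfolding bounded_PA_def
  using support_of_subset[OF support_closed_if_step_closed] assms finite_subset by metis

fun srexp_closure :: "'a srexp \<Rightarrow> 'a srexp set" where
  "srexp_closure Zero = {Zero}"
| "srexp_closure One = {One}"
| "srexp_closure (Sym a) = {Sym a, One}"
| "srexp_closure (Plus e f) = {Plus e f} \<union> srexp_closure e \<union> srexp_closure f"
| "srexp_closure (Seq e f) =
     (\<lambda>h. Seq h f) ` srexp_closure e \<union> srexp_closure e \<union> srexp_closure f"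
| "srexp_closure (Par e f) = {Par e f, One} \<union> srexp_closure e \<union> srexp_closure f"
| "srexp_closure (Star e) =
     {Star e} \<union> (\<lambda>h. Seq h (Star e)) ` srexp_closure e \<union> srexp_closure e"

lemma srexp_closure_self: "e \<in> srexp_closure e"
  by (induction e) auto

lemma finite_srexp_closure: "finite (srexp_closure e)"
  by (induction e) auto

abbreviation supp_step_S :: "'a srexp \<Rightarrow> 'a srexp \<Rightarrow> bool" where
  "supp_step_S \<equiv> supp_step delta_S gamma_S"

lemma supp_step_S_Zero [simp]: "\<not> supp_step_S g Zero"
  and supp_step_S_One [simp]: "\<not> supp_step_S g One"
  and supp_step_S_Sym: "supp_step_S g (Sym a) \<Longrightarrow> g = One"
  and supp_step_S_Plus: "supp_step_S g (Plus e f) \<Longrightarrow> supp_step_S g e \<or> supp_step_S g f"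
  and supp_step_S_Par: "supp_step_S g (Par e f) \<Longrightarrow> g = One \<or> g = e \<or> g = f"
  and supp_step_S_Seq: "supp_step_S g (Seq e f) \<Longrightarrow>
    (\<exists>h. g = Seq h f \<and> supp_step_S h e) \<or> supp_step_S g e \<or> supp_step_S g f"
  and supp_step_S_Star: "supp_step_S g (Star e) \<Longrightarrow>
    (\<exists>h. g = Seq h (Star e) \<and> supp_step_S h e) \<or> supp_step_S g e"
  by (auto simp: supp_step_def fstar_def split: if_splits)

lemma srexp_closure_step_closed:
  "g \<in> srexp_closure e \<Longrightarrow> supp_step_S g' g \<Longrightarrow> g' \<in> srexp_closure e"
proof (induction e arbitrary: g g')
  case Zero
  then show ?case by simp
next
  case One
  then show ?case by simp
next
  case (Sym a)
  then show ?case by (auto dest: supp_step_S_Sym)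
next
  case (Plus e f)
  have "g' \<in> srexp_closure (Plus e f)" if "supp_step_S g' (Plus e f)"
    using supp_step_S_Plus[OF that] Plus.IH srexp_closure_self[of e] srexp_closure_self[of f]
    by auto
  with Plus show ?case by auto
next
  case (Par e f)
  have "g' \<in> srexp_closure (Par e f)" if "supp_step_S g' (Par e f)"
    using supp_step_S_Par[OF that] srexp_closure_self[of e] srexp_closure_self[of f] by auto
  with Par show ?case by auto
next
  case (Seq e f)
  then show ?case
    using srexp_closure_self[of e] srexp_closure_self[of f]
    by (auto dest!: supp_step_S_Seq)
next
  case (Star e)
  have star_step: "g' \<in> srexp_closure (Star e)" if "supp_step_S g' (Star e)" for g'
    using supp_step_S_Star[OF that] Star.IH srexp_closure_self[of e] by auto
  from Star.prems star_step Star.IH show ?case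
    by (auto dest!: supp_step_S_Seq)
qed

theorem lemma7p15:
  shows "bounded_PA (delta_S :: 'a::finite srexp \<Rightarrow> 'a \<Rightarrow> 'a srexp set) gamma_S"
  using srexp_closure_self finite_srexp_closure srexp_closure_step_closed
  by (rule bounded_PA_if_finite_step_closed)

end
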